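(* For each $n$, let $A^{(n)}$ be a clustering of $\{1,\dots,n\}$, let $s^{(n)}$ be a cluster-size specification of $n$ elements, let $B^{(n)}\sim\mathcal C(s^{(n)})$, and let $N_{11}^{(n)}$ be the number of unordered pairs of distinct elements lying in a common cluster of both $A^{(n)}$ and $B^{(n)}$. Then $\operatorname{Var}(N_{11}^{(n)})=o(n^4)$ as $n\to\infty$; consequently $N_{11}^{(n)}/N-m_Am_B/N^2\to0$ in probability, where $N=\binom n2$ and $m_A,m_B$ are the numbers of intra-cluster pairs of $A^{(n)}$ and $B^{(n)}$.
   Context: A clustering is a partition into nonempty clusters; an intra-cluster pair is a pair of distinct elements in the same cluster. For a multiset $s$ of positive integers summing to $n$, $\mathcal C(s)$ is the uniform distribution over clusterings of $\{1,\dots,n\}$ whose multiset of cluster sizes is $s$. *)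

theory Defs
  imports "HOL-Probability.Probability" "HOL-Library.Disjoint_Sets"
    "HOL-Library.Multiset" "HOL-Library.Landau_Symbols"
begin

definition clusterings :: "nat \<Rightarrow> nat set set set" where
  "clusterings n = {P. partition_on {1..n} P}"

definition cluster_sizes :: "nat set set \<Rightarrow> nat multiset" where
  "cluster_sizes P = image_mset card (mset_set P)"

definition size_spec :: "nat \<Rightarrow> nat multiset \<Rightarrow> bool" where
  "size_spec n s \<longleftrightarrow> (\<forall>k\<in>#s. 0 < k) \<and> sum_mset s = n"

definition unif_clustering :: "nat \<Rightarrow> nat multiset \<Rightarrow> nat set set pmf" where
  "unif_clustering n s = pmf_of_set {P \<in> clusterings n. cluster_sizes P = s}"

definition intra_pairs :: "nat set set \<Rightarrow> nat set set" where
  "intra_pairs P = {{i, j} | i j. i \<noteq> j \<and> (\<exists>C\<in>P. i \<in> C \<and> j \<in> C)}"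

definition N11 :: "nat set set \<Rightarrow> nat set set \<Rightarrow> nat" where
  "N11 A B = card (intra_pairs A \<inter> intra_pairs B)"

definition num_intra :: "nat set set \<Rightarrow> nat" where
  "num_intra P = card (intra_pairs P)"

end

theory Submission
  imports Defs "HOL-Real_Asymp.Real_Asymp"
begin

text \<open>
  Write \<open>N\<^sub>1\<^sub>1\<close> as the sum, over the intra-cluster pairs \<open>p\<close> of \<open>A\<close>, of the indicator that \<open>p\<close>
  is also intra-cluster in \<open>B\<close>; its variance is the sum of the covariances \<open>cov(p, q)\<close> of these
  indicators. Relabelling by a permutation of \<open>{1..n}\<close> preserves the uniform distribution on
  clusterings with size multiset \<open>s\<close>, so \<open>cov(p, q)\<close> has one common value \<open>c\<close> on all disjoint
  pairs \<open>p, q\<close>; every covariance lies in \<open>[-1, 1]\<close>, and only \<open>O(n\<^sup>3)\<close> pairs of pairs meet.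
  Summing over all pairs instead of those of \<open>A\<close> counts the intra-cluster pairs of \<open>B\<close>, which is a
  constant of variance \<open>0\<close>; this forces \<open>|c|\<close> times the number of disjoint pairs to be \<open>O(n\<^sup>3)\<close>, and
  hence \<open>Var N\<^sub>1\<^sub>1 = O(n\<^sup>3)\<close>. Chebyshev's inequality about \<open>E N\<^sub>1\<^sub>1 = m\<^sub>A m\<^sub>B / N\<close> gives the
  convergence in probability.
\<close>

lemma exists_partition_on_with_sizes:
  assumes "finite A" "\<forall>k\<in>#s. 0 < k" "sum_mset s = card A"
  shows "\<exists>P. partition_on A P \<and> cluster_sizes P = s"
  using assms
proof (induction s arbitrary: A)
  case empty
  then show ?case
    by (auto simp: cluster_sizes_def partition_on_empty intro!: exI[of _ "{}"])
next
  case (add k s)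
  obtain C where C: "C \<subseteq> A" "card C = k" "finite C"
    using add.prems by (metis le_add1 obtain_subset_with_card_n sum_mset.add_mset)
  have "card (A - C) = sum_mset s"
    using add.prems C by (simp add: card_Diff_subset)
  then obtain P where P: "partition_on (A - C) P" "cluster_sizes P = s"
    using add.IH[of "A - C"] add.prems by auto
  have "C \<noteq> {}" using C add.prems by auto
  then have "partition_on A (insert C P)"
    using partition_on_insert[of C P A] P(1) C(1) partition_onD1[OF P(1)]
    by (auto simp: disjnt_def Diff_partition)
  moreover have "C \<notin> P"
    using P(1) \<open>C \<noteq> {}\<close> partition_onD1 by fastforce
  moreover have "finite P"
    using P(1) add.prems(1) by (meson finite_Diff finite_elements)
  ultimately show ?case
    using P(2) C(2) by (auto simp: cluster_sizes_def intro!: exI[of _ "insert C P"])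
qed

lemma exists_permutes_disjoint_pair:
  assumes U: "finite U" "p \<union> q \<subseteq> U" "p' \<union> q' \<subseteq> U"
    and card: "card p = card p'" "card q = card q'"
    and disj: "p \<inter> q = {}" "p' \<inter> q' = {}"
  obtains \<sigma> where "\<sigma> permutes U" "\<sigma> ` p = p'" "\<sigma> ` q = q'"
proof -
  define R where "R = U - (p \<union> q)"
  define R' where "R' = U - (p' \<union> q')"
  have fin: "finite p" "finite q" "finite p'" "finite q'" "finite R" "finite R'"
    using U by (auto simp: R_def R'_def intro: rev_finite_subset)
  have "card R = card R'"
    using U card disj fin by (simp add: R_def R'_def card_Diff_subset card_Un_disjoint)
  then obtain f3 where f3: "bij_betw f3 R R'"
    using fin by (meson finite_same_card_bij)
  obtain f1 f2 where f1: "bij_betw f1 p p'" and f2: "bij_betw f2 q q'"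
    using fin card by (meson finite_same_card_bij)
  define \<sigma> where "\<sigma> x = (if x \<in> p then f1 x else if x \<in> q then f2 x else if x \<in> R then f3 x else x)" for x
  have b1: "bij_betw \<sigma> p p'"
    using f1 by (rule bij_betw_cong[THEN iffD1, rotated]) (simp add: \<sigma>_def)
  have b2: "bij_betw \<sigma> q q'"
    using f2 disj(1) by (intro bij_betw_cong[THEN iffD1, OF _ f2]) (auto simp: \<sigma>_def)
  have b3: "bij_betw \<sigma> R R'"
    by (intro bij_betw_cong[THEN iffD1, OF _ f3]) (auto simp: \<sigma>_def R_def)
  have "bij_betw \<sigma> (p \<union> (q \<union> R)) (p' \<union> (q' \<union> R'))"
    using disj(2) by (intro bij_betw_combine b1 bij_betw_combine[OF b2 b3]) (auto simp: R'_def)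
  moreover have "p \<union> (q \<union> R) = U" "p' \<union> (q' \<union> R') = U"
    using U by (auto simp: R_def R'_def)
  ultimately have "\<sigma> permutes U"
    by (intro bij_imp_permutes) (auto simp: \<sigma>_def R_def)
  then show thesis
    using that b1 b2 by (meson bij_betw_imp_surj_on)
qed

lemma (in prob_space) integrable_indicator_event:
  "A \<in> events \<Longrightarrow> integrable M (indicator A :: 'a \<Rightarrow> real)"
  by (simp add: less_top[symmetric])

lemma (in prob_space) expectation_sum_indicator:
  assumes "\<And>i. i \<in> I \<Longrightarrow> E i \<in> events"
  shows "expectation (\<lambda>x. \<Sum>i\<in>I. indicator (E i) x) = (\<Sum>i\<in>I. prob (E i))"
  using assms by (simp add: integral_sum integrable_indicator_event)

lemma (in prob_space) variance_sum_indicator: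
  assumes "\<And>i. i \<in> I \<Longrightarrow> E i \<in> events"
  shows "variance (\<lambda>x. \<Sum>i\<in>I. indicator (E i) x)
       = (\<Sum>i\<in>I. \<Sum>j\<in>I. prob (E i \<inter> E j) - prob (E i) * prob (E j))"
proof -
  have square: "(\<Sum>i\<in>I. indicator (E i) x)\<^sup>2 = (\<Sum>i\<in>I. \<Sum>j\<in>I. indicator (E i \<inter> E j) x :: real)" for x
    by (simp add: power2_eq_square sum_product indicator_inter_arith)
  have "variance (\<lambda>x. \<Sum>i\<in>I. indicator (E i) x)
      = expectation (\<lambda>x. \<Sum>i\<in>I. \<Sum>j\<in>I. indicator (E i \<inter> E j) x) - (\<Sum>i\<in>I. prob (E i))\<^sup>2"
    using assms by (subst variance_eq)
      (auto simp: square expectation_sum_indicator integrable_indicator_event)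
  also have "\<dots> = (\<Sum>i\<in>I. \<Sum>j\<in>I. prob (E i \<inter> E j)) - (\<Sum>i\<in>I. \<Sum>j\<in>I. prob (E i) * prob (E j))"
    using assms by (simp add: integral_sum integrable_indicator_event expectation_sum_indicator
        power2_eq_square sum_product)
  finally show ?thesis
    by (simp add: sum_subtractf)
qed

lemma pmf_expectation_eq_const:
  fixes f :: "'a \<Rightarrow> real"
  assumes "\<And>x. x \<in> set_pmf M \<Longrightarrow> f x = c"
  shows "measure_pmf.expectation M f = c"
proof -
  have "measure_pmf.expectation M f = measure_pmf.expectation M (\<lambda>_. c)"
    using assms by (intro integral_cong_AE) (simp_all add: AE_measure_pmf_iff)
  then show ?thesis
    by simp
qed

lemma sum_subset_le_if_sum_eq_0:
  fixes h :: "'a \<Rightarrow> real"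
  assumes U: "finite U" "J \<subseteq> U" "sum h U = 0"
    and const: "\<And>x y. x \<in> U - E \<Longrightarrow> y \<in> U - E \<Longrightarrow> h x = h y"
    and bound: "\<And>x. x \<in> U \<Longrightarrow> \<bar>h x\<bar> \<le> 1"
  shows "sum h J \<le> 2 * card (U \<inter> E)"
proof -
  obtain c where c: "\<And>x. x \<in> U - E \<Longrightarrow> h x = c"
    using const by metis
  have split: "sum h X = c * card (X - E) + sum h (X \<inter> E)" if "X \<subseteq> U" for X
  proof -
    have "sum h (X - E) = c * card (X - E)"
      using that c by (simp add: subset_iff)
    then show ?thesis
      using sum.Int_Diff[OF finite_subset[OF that U(1)], of h E] by simp
  qed
  have exceptional: "\<bar>sum h (X \<inter> E)\<bar> \<le> card (X \<inter> E)" if "X \<subseteq> U" for X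
  proof -
    have "\<bar>sum h (X \<inter> E)\<bar> \<le> (\<Sum>x\<in>X \<inter> E. \<bar>h x\<bar>)"
      by (rule sum_abs)
    also have "\<dots> \<le> of_nat (card (X \<inter> E)) * 1"
      using that bound by (intro sum_bounded_above) auto
    finally show ?thesis by simp
  qed
  have "card (J - E) \<le> card (U - E)" "card (J \<inter> E) \<le> card (U \<inter> E)"
    using U(1,2) by (auto intro: card_mono)
  then have "\<bar>c\<bar> * card (J - E) \<le> \<bar>c\<bar> * card (U - E)"
    by (simp add: mult_left_mono)
  also have "\<dots> \<le> card (U \<inter> E)"
    using split[of U] exceptional[of U] U(3) by (simp add: abs_mult)
  finally have "\<bar>c\<bar> * card (J - E) \<le> card (U \<inter> E)" .
  moreover have "c * card (J - E) \<le> \<bar>c\<bar> * card (J - E)"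
    by (simp add: mult_right_mono)
  ultimately show ?thesis
    using split[OF U(2)] exceptional[OF U(2)] \<open>card (J \<inter> E) \<le> card (U \<inter> E)\<close> by linarith
qed

lemma real_choose_two: "real (n choose 2) = real n * (real n - 1) / 2"
  by (cases n) (simp_all add: choose_two field_char_0_class.of_nat_div mod_eq_0_iff_dvd algebra_simps)

lemma square_le_4_choose_two: "n \<ge> 2 \<Longrightarrow> real n ^ 2 \<le> 4 * real (n choose 2)"
  by (simp add: real_choose_two power2_eq_square algebra_simps)

lemma cube_div_square_choose_two_le:
  fixes \<epsilon> :: real
  assumes "n \<ge> 2" "\<epsilon> > 0"
  shows "4 * real n ^ 3 / (\<epsilon> * real (n choose 2))^2 \<le> 64 / (\<epsilon>^2 * real n)"
proof -
  have "(real n ^ 2 / 4) ^ 2 \<le> real (n choose 2) ^ 2"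
    using square_le_4_choose_two[OF assms(1)] by (intro power_mono) simp_all
  then have le: "\<epsilon> ^ 2 * (real n ^ 2 / 4) ^ 2 \<le> (\<epsilon> * real (n choose 2)) ^ 2"
    by (simp add: power_mult_distrib mult_left_mono)
  have pos: "0 < \<epsilon> ^ 2 * (real n ^ 2 / 4) ^ 2"
    using assms by simp
  have "4 * real n ^ 3 / (\<epsilon> * real (n choose 2))^2 \<le> 4 * real n ^ 3 / (\<epsilon> ^ 2 * (real n ^ 2 / 4) ^ 2)"
    by (rule frac_le[OF _ order_refl pos le]) simp
  also have "\<dots> = 64 / (\<epsilon>^2 * real n)"
    using assms(1) by (simp add: field_simps power2_eq_square power3_eq_cube)
  finally show ?thesis .
qed

section \<open>Clusterings with prescribed cluster sizes\<close>

definition sized_clusterings :: "nat \<Rightarrow> nat multiset \<Rightarrow> nat set set set" where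
  "sized_clusterings n s = {P \<in> clusterings n. cluster_sizes P = s}"

definition pairs_upto :: "nat \<Rightarrow> nat set set" where
  "pairs_upto n = {p. p \<subseteq> {1..n} \<and> card p = 2}"

lemma sized_clusterings_nonempty:
  "size_spec n s \<Longrightarrow> sized_clusterings n s \<noteq> {}"
  using exists_partition_on_with_sizes[of "{1..n}" s]
  by (auto simp: size_spec_def sized_clusterings_def clusterings_def)

lemma finite_sized_clusterings: "finite (sized_clusterings n s)"
  by (rule finite_subset[of _ "Pow (Pow {1..n})"])
     (auto simp: sized_clusterings_def clusterings_def dest: partition_onD1)

lemma set_pmf_unif_clustering:
  "size_spec n s \<Longrightarrow> set_pmf (unif_clustering n s) = sized_clusterings n s"
  by (simp add: unif_clustering_def sized_clusterings_def[symmetric]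
      finite_sized_clusterings sized_clusterings_nonempty)

lemma intra_pairs_eq_UN:
  "partition_on A P \<Longrightarrow> intra_pairs P = (\<Union>C\<in>P. {p. p \<subseteq> C \<and> card p = 2})"
  unfolding intra_pairs_def by (auto simp: card_2_iff)

lemma card_intra_pairs:
  assumes "partition_on A P" "finite A"
  shows "card (intra_pairs P) = (\<Sum>C\<in>P. card C choose 2)"
proof -
  have fin: "finite P" "\<And>C. C \<in> P \<Longrightarrow> finite C"
    using assms by (auto intro: finite_elements rev_finite_subset dest: partition_onD1)
  have "card (intra_pairs P) = (\<Sum>C\<in>P. card {p. p \<subseteq> C \<and> card p = 2})"
    unfolding intra_pairs_eq_UN[OF assms(1)]
  proof (rule card_UN_disjoint)
    show "\<forall>C\<in>P. \<forall>D\<in>P. C \<noteq> D \<longrightarrow> {p. p \<subseteq> C \<and> card p = 2} \<inter> {p. p \<subseteq> D \<and> card p = 2} = {}"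
      using partition_onD2[OF assms(1)] by (fastforce simp: disjoint_def card_2_iff)
  qed (use fin in auto)
  also have "\<dots> = (\<Sum>C\<in>P. card C choose 2)"
    using fin by (intro sum.cong) (auto simp: n_subsets)
  finally show ?thesis .
qed

lemma num_intra_sized_clusterings:
  "B \<in> sized_clusterings n s \<Longrightarrow> num_intra B = (\<Sum>k\<in>#s. k choose 2)"
  by (auto simp: sized_clusterings_def clusterings_def num_intra_def card_intra_pairs
      cluster_sizes_def sum_unfold_sum_mset multiset.map_comp comp_def)

lemma intra_pairs_subset_pairs_upto:
  "partition_on {1..n} P \<Longrightarrow> intra_pairs P \<subseteq> pairs_upto n"
  unfolding intra_pairs_def pairs_upto_def by (fastforce dest: partition_onD1)

lemma finite_pairs_upto: "finite (pairs_upto n)"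
  by (rule finite_subset[of _ "Pow {1..n}"]) (auto simp: pairs_upto_def)

lemma card_pairs_upto: "card (pairs_upto n) = n choose 2"
  unfolding pairs_upto_def using n_subsets[of "{1..n}" 2] by simp

lemma card_pairs_upto_meeting_le:
  assumes "p \<in> pairs_upto n"
  shows "card {q \<in> pairs_upto n. p \<inter> q \<noteq> {}} \<le> 2 * n"
proof -
  have meets: "{q \<in> pairs_upto n. p \<inter> q \<noteq> {}} \<subseteq> (\<lambda>(x, y). {x, y}) ` (p \<times> {1..n})"
  proof
    fix q assume q: "q \<in> {q \<in> pairs_upto n. p \<inter> q \<noteq> {}}"
    then have "card q = 2" "q \<subseteq> {1..n}"
      by (auto simp: pairs_upto_def)
    then obtain a b where ab: "q = {a, b}" "a \<in> {1..n}" "b \<in> {1..n}"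
      by (metis card_2_iff insert_subset)
    obtain x where "x \<in> p" "x \<in> q"
      using q by blast
    then have "q = {x, b} \<and> x \<in> p \<and> b \<in> {1..n} \<or> q = {x, a} \<and> x \<in> p \<and> a \<in> {1..n}"
      using ab by auto
    then show "q \<in> (\<lambda>(x, y). {x, y}) ` (p \<times> {1..n})"
      by auto
  qed
  have fin: "finite (p \<times> {1..n})"
    using assms by (simp add: pairs_upto_def card_ge_0_finite)
  have "card {q \<in> pairs_upto n. p \<inter> q \<noteq> {}} \<le> card ((\<lambda>(x, y). {x, y}) ` (p \<times> {1..n}))"
    using meets fin by (intro card_mono) auto
  also have "\<dots> \<le> card (p \<times> {1..n})"
    using fin by (rule card_image_le)
  also have "\<dots> = 2 * n"
    using assms by (simp add: pairs_upto_def card_cartesian_product)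
  finally show ?thesis .
qed

lemma card_meeting_pairs_upto_le:
  "card {(p, q) \<in> pairs_upto n \<times> pairs_upto n. p \<inter> q \<noteq> {}} \<le> 2 * n ^ 3"
proof -
  have "{(p, q) \<in> pairs_upto n \<times> pairs_upto n. p \<inter> q \<noteq> {}}
      = Sigma (pairs_upto n) (\<lambda>p. {q \<in> pairs_upto n. p \<inter> q \<noteq> {}})"
    by auto
  then have "card {(p, q) \<in> pairs_upto n \<times> pairs_upto n. p \<inter> q \<noteq> {}}
      = (\<Sum>p\<in>pairs_upto n. card {q \<in> pairs_upto n. p \<inter> q \<noteq> {}})"
    by (simp add: finite_pairs_upto)
  also have "\<dots> \<le> (\<Sum>p\<in>pairs_upto n. 2 * n)"
    by (intro sum_mono card_pairs_upto_meeting_le)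
  also have "\<dots> \<le> (n * n) * (2 * n)"
  proof -
    have "n choose 2 \<le> n * n"
      unfolding choose_two by (meson div_le_dividend diff_le_self mult_le_mono2 order_trans)
    then show ?thesis
      by (simp add: card_pairs_upto)
  qed
  finally show ?thesis
    by (simp add: power3_eq_cube)
qed

section \<open>Invariance under relabelling\<close>

lemma intra_pairs_image:
  assumes "inj \<sigma>"
  shows "intra_pairs (image \<sigma> ` P) = image \<sigma> ` intra_pairs P"
proof (intro equalityI subsetI)
  fix x assume "x \<in> intra_pairs (image \<sigma> ` P)"
  then obtain i j C where x: "x = {\<sigma> i, \<sigma> j}" "\<sigma> i \<noteq> \<sigma> j" "C \<in> P" "i \<in> C" "j \<in> C"
    unfolding intra_pairs_def by blast
  then have "{i, j} \<in> intra_pairs P"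
    unfolding intra_pairs_def by blast
  then show "x \<in> image \<sigma> ` intra_pairs P"
    using x(1) by (intro image_eqI[of _ _ "{i, j}"]) auto
next
  fix x assume "x \<in> image \<sigma> ` intra_pairs P"
  then obtain i j C where x: "x = {\<sigma> i, \<sigma> j}" "i \<noteq> j" "C \<in> P" "i \<in> C" "j \<in> C"
    unfolding intra_pairs_def by blast
  moreover have "\<sigma> i \<noteq> \<sigma> j"
    using assms x(2) by (meson injD)
  ultimately show "x \<in> intra_pairs (image \<sigma> ` P)"
    unfolding intra_pairs_def by blast
qed

lemma cluster_sizes_image:
  assumes "inj \<sigma>" "finite P"
  shows "cluster_sizes (image \<sigma> ` P) = cluster_sizes P"
proof -
  have "inj_on (image \<sigma>) P"
    using assms(1) by (meson inj_image_eq_iff inj_onI)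
  then show ?thesis
    using assms by (simp add: cluster_sizes_def image_mset_mset_set[symmetric]
        multiset.map_comp comp_def card_image inj_on_subset[of \<sigma> UNIV])
qed

lemma image_image_sized_clusterings:
  assumes "\<sigma> permutes {1..n}" "B \<in> sized_clusterings n s"
  shows "image \<sigma> ` B \<in> sized_clusterings n s"
proof -
  have inj: "inj \<sigma>" and im: "\<sigma> ` {1..n} = {1..n}"
    using assms(1) by (auto simp: permutes_inj permutes_image)
  have part: "partition_on {1..n} B"
    using assms(2) by (simp add: sized_clusterings_def clusterings_def)
  have "image \<sigma> ` B - {{}} = image \<sigma> ` B"
    using partition_onD3[OF part] by auto
  then have "partition_on {1..n} (image \<sigma> ` B)"
    using partition_on_inj_image[OF part inj_on_subset[OF inj]] im by simp
  moreover have "finite B"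
    using part by (meson finite_atLeastAtMost finite_elements)
  ultimately show ?thesis
    using assms(2) by (simp add: sized_clusterings_def clusterings_def cluster_sizes_image[OF inj])
qed

lemma map_pmf_unif_clustering_permutes:
  assumes "size_spec n s" "\<sigma> permutes {1..n}"
  shows "map_pmf (image (image \<sigma>)) (unif_clustering n s) = unif_clustering n s"
  unfolding unif_clustering_def sized_clusterings_def[symmetric]
proof (rule map_pmf_of_set_bij_betw)
  have inv: "inv \<sigma> permutes {1..n}"
    using assms(2) by (rule permutes_inv)
  have "image (image (inv \<sigma>)) (image (image \<sigma>) B) = B"
    "image (image \<sigma>) (image (image (inv \<sigma>)) B) = B" for B :: "nat set set"
    by (simp_all add: image_comp permutes_inv_o[OF assms(2)])
  then show "bij_betw (image (image \<sigma>)) (sized_clusterings n s) (sized_clusterings n s)"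
    by (intro bij_betwI[where g = "image (image (inv \<sigma>))"])
       (simp_all add: Pi_iff image_image_sized_clusterings[OF assms(2)] image_image_sized_clusterings[OF inv])
qed (use assms in \<open>auto simp: finite_sized_clusterings sized_clusterings_nonempty\<close>)

definition co_clustered :: "nat set \<Rightarrow> nat set set set" where
  "co_clustered p = {B. p \<in> intra_pairs B}"

definition pair_cov :: "nat \<Rightarrow> nat multiset \<Rightarrow> nat set \<Rightarrow> nat set \<Rightarrow> real" where
  "pair_cov n s p q =
     measure_pmf.prob (unif_clustering n s) (co_clustered p \<inter> co_clustered q)
     - measure_pmf.prob (unif_clustering n s) (co_clustered p)
       * measure_pmf.prob (unif_clustering n s) (co_clustered q)"

lemma prob_unif_clustering_vimage_permutes:
  assumes "size_spec n s" "\<sigma> permutes {1..n}"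
  shows "measure_pmf.prob (unif_clustering n s) (image (image \<sigma>) -` E)
       = measure_pmf.prob (unif_clustering n s) E"
  by (metis assms map_pmf_unif_clustering_permutes measure_map_pmf)

lemma vimage_co_clustered:
  assumes "inj \<sigma>"
  shows "image (image \<sigma>) -` co_clustered (\<sigma> ` p) = co_clustered p"
proof -
  have "inj (image \<sigma>)"
    using assms inj_on_image[of \<sigma> UNIV] by simp
  then show ?thesis
    using assms by (simp add: co_clustered_def intra_pairs_image inj_image_mem_iff)
qed

lemma prob_co_clustered_permutes:
  assumes "size_spec n s" "\<sigma> permutes {1..n}"
  shows "measure_pmf.prob (unif_clustering n s) (co_clustered (\<sigma> ` p))
       = measure_pmf.prob (unif_clustering n s) (co_clustered p)"
  using prob_unif_clustering_vimage_permutes[OF assms] vimage_co_clustered[OF permutes_inj[OF assms(2)]]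
  by metis

lemma pair_cov_permutes:
  assumes "size_spec n s" "\<sigma> permutes {1..n}"
  shows "pair_cov n s (\<sigma> ` p) (\<sigma> ` q) = pair_cov n s p q"
  using prob_unif_clustering_vimage_permutes[OF assms,
      of "co_clustered (\<sigma> ` p) \<inter> co_clustered (\<sigma> ` q)"]
  by (simp add: pair_cov_def prob_co_clustered_permutes[OF assms]
      vimage_co_clustered[OF permutes_inj[OF assms(2)]])

lemma pair_cov_eq_if_disjoint:
  assumes "size_spec n s" "p \<in> pairs_upto n" "q \<in> pairs_upto n" "p' \<in> pairs_upto n" "q' \<in> pairs_upto n"
    "p \<inter> q = {}" "p' \<inter> q' = {}"
  shows "pair_cov n s p q = pair_cov n s p' q'"
proof -
  have sub: "p \<union> q \<subseteq> {1..n}" "p' \<union> q' \<subseteq> {1..n}" and card: "card p = card p'" "card q = card q'"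
    using assms(2-5) by (auto simp: pairs_upto_def)
  obtain \<sigma> where "\<sigma> permutes {1..n}" "\<sigma> ` p = p'" "\<sigma> ` q = q'"
    using exists_permutes_disjoint_pair[OF finite_atLeastAtMost sub card assms(6,7)] by blast
  then show ?thesis
    using pair_cov_permutes[OF assms(1)] by metis
qed

lemma pair_cov_abs_le_1: "\<bar>pair_cov n s p q\<bar> \<le> 1"
proof -
  let ?P = "measure_pmf.prob (unif_clustering n s)"
  have P: "0 \<le> ?P A \<and> ?P A \<le> 1" for A
    by simp
  then have "0 \<le> ?P (co_clustered p) * ?P (co_clustered q)"
    "?P (co_clustered p) * ?P (co_clustered q) \<le> 1"
    by (simp_all add: mult_le_one)
  then show ?thesis
    unfolding pair_cov_def using P by (smt (verit))
qed

section \<open>Moments of the number of common intra-cluster pairs\<close>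

lemma indicator_co_clustered: "indicator (co_clustered p) B = indicator (intra_pairs B) p"
  by (simp add: co_clustered_def indicator_def)

lemma card_Int_intra_pairs_eq_sum_indicator:
  "finite J \<Longrightarrow> real (card (J \<inter> intra_pairs B)) = (\<Sum>p\<in>J. indicator (co_clustered p) B)"
  by (simp add: indicator_co_clustered sum_indicator_eq_card[of J "intra_pairs B", symmetric]
      real_of_nat_indicator)

lemma expectation_card_Int_intra_pairs:
  "measure_pmf.expectation (unif_clustering n s) (\<lambda>B. real (card (J \<inter> intra_pairs B)))
     = (\<Sum>p\<in>J. measure_pmf.prob (unif_clustering n s) (co_clustered p))"
  if "finite J"
  by (simp add: card_Int_intra_pairs_eq_sum_indicator[OF that] measure_pmf.expectation_sum_indicator)

lemma variance_card_Int_intra_pairs: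
  "measure_pmf.variance (unif_clustering n s) (\<lambda>B. real (card (J \<inter> intra_pairs B)))
     = (\<Sum>p\<in>J. \<Sum>q\<in>J. pair_cov n s p q)"
  if "finite J"
  using measure_pmf.variance_sum_indicator[of J co_clustered "unif_clustering n s"]
  by (simp add: card_Int_intra_pairs_eq_sum_indicator[OF that] pair_cov_def)

lemma card_pairs_upto_Int_intra_pairs:
  "B \<in> sized_clusterings n s \<Longrightarrow> card (pairs_upto n \<inter> intra_pairs B) = (\<Sum>k\<in>#s. k choose 2)"
  using intra_pairs_subset_pairs_upto num_intra_sized_clusterings
  by (fastforce simp: sized_clusterings_def clusterings_def num_intra_def Int_absorb1)

lemma expectation_card_pairs_upto_Int_intra_pairs:
  "size_spec n s \<Longrightarrow> measure_pmf.expectation (unif_clustering n s)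
     (\<lambda>B. real (card (pairs_upto n \<inter> intra_pairs B))) = (\<Sum>k\<in>#s. k choose 2)"
  by (intro pmf_expectation_eq_const) (simp add: set_pmf_unif_clustering card_pairs_upto_Int_intra_pairs)

lemma variance_card_pairs_upto_Int_intra_pairs:
  "size_spec n s \<Longrightarrow> measure_pmf.variance (unif_clustering n s)
     (\<lambda>B. real (card (pairs_upto n \<inter> intra_pairs B))) = 0"
  by (intro pmf_expectation_eq_const)
     (simp add: set_pmf_unif_clustering card_pairs_upto_Int_intra_pairs
       expectation_card_pairs_upto_Int_intra_pairs)

lemma prob_co_clustered:
  assumes "size_spec n s" "p \<in> pairs_upto n"
  shows "measure_pmf.prob (unif_clustering n s) (co_clustered p) = (\<Sum>k\<in>#s. k choose 2) / (n choose 2)"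
proof -
  let ?P = "measure_pmf.prob (unif_clustering n s)"
  have same: "?P (co_clustered q) = ?P (co_clustered p)" if "q \<in> pairs_upto n" for q
  proof -
    have "p \<union> {} \<subseteq> {1..n}" "q \<union> {} \<subseteq> {1..n}" "card p = card q"
      using assms(2) that by (auto simp: pairs_upto_def)
    then obtain \<sigma> where "\<sigma> permutes {1..n}" "\<sigma> ` p = q"
      by (metis exists_permutes_disjoint_pair finite_atLeastAtMost Int_empty_right)
    then show ?thesis
      using prob_co_clustered_permutes[OF assms(1)] by metis
  qed
  have "real (\<Sum>k\<in>#s. k choose 2)
      = measure_pmf.expectation (unif_clustering n s) (\<lambda>B. real (card (pairs_upto n \<inter> intra_pairs B)))"
    by (simp add: expectation_card_pairs_upto_Int_intra_pairs[OF assms(1)])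
  also have "\<dots> = (\<Sum>q\<in>pairs_upto n. ?P (co_clustered q))"
    by (rule expectation_card_Int_intra_pairs[OF finite_pairs_upto])
  also have "\<dots> = real (n choose 2) * ?P (co_clustered p)"
    by (simp add: same card_pairs_upto)
  finally have "real (n choose 2) * ?P (co_clustered p) = (\<Sum>k\<in>#s. k choose 2)" ..
  moreover have "n choose 2 > 0"
    using assms(2) card_pairs_upto finite_pairs_upto by (metis card_gt_0_iff empty_iff)
  ultimately show ?thesis
    by (simp add: field_simps)
qed

lemma variance_card_Int_intra_pairs_le:
  assumes "size_spec n s" "J \<subseteq> pairs_upto n"
  shows "measure_pmf.variance (unif_clustering n s) (\<lambda>B. real (card (J \<inter> intra_pairs B)))
      \<le> 4 * real n ^ 3"
proof -
  let ?U = "pairs_upto n \<times> pairs_upto n" and ?E = "{(p, q). p \<inter> q \<noteq> {}}"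
  let ?h = "\<lambda>(p, q). pair_cov n s p q"
  have variance: "measure_pmf.variance (unif_clustering n s) (\<lambda>B. real (card (X \<inter> intra_pairs B)))
      = sum ?h (X \<times> X)" if "X \<subseteq> pairs_upto n" for X
    using variance_card_Int_intra_pairs[OF finite_subset[OF that finite_pairs_upto]]
    by (simp add: sum.cartesian_product)
  have "sum ?h (J \<times> J) \<le> 2 * card (?U \<inter> ?E)"
  proof (rule sum_subset_le_if_sum_eq_0)
    show "sum ?h ?U = 0"
      using variance[OF order_refl] variance_card_pairs_upto_Int_intra_pairs[OF assms(1)] by simp
    show "?h x = ?h y" if "x \<in> ?U - ?E" "y \<in> ?U - ?E" for x y
      using that pair_cov_eq_if_disjoint[OF assms(1)] by auto
  qed (use assms(2) pair_cov_abs_le_1 in \<open>auto simp: finite_pairs_upto\<close>)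
  moreover have "?U \<inter> ?E = {(p, q) \<in> ?U. p \<inter> q \<noteq> {}}"
    by auto
  then have "2 * real (card (?U \<inter> ?E)) \<le> 4 * real n ^ 3"
    using card_meeting_pairs_upto_le[of n] by (simp add: of_nat_le_iff[symmetric, where 'a = real])
  ultimately show ?thesis
    using variance[OF assms(2)] by linarith
qed

lemma expectation_N11:
  assumes "size_spec n s" "A \<in> clusterings n"
  shows "measure_pmf.expectation (unif_clustering n s) (\<lambda>B. real (N11 A B))
       = real (num_intra A) * (\<Sum>k\<in>#s. k choose 2) / (n choose 2)"
proof -
  have sub: "intra_pairs A \<subseteq> pairs_upto n"
    using assms(2) by (simp add: clusterings_def intra_pairs_subset_pairs_upto)
  then have "finite (intra_pairs A)"
    using finite_pairs_upto by (rule finite_subset)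
  then show ?thesis
    using sub by (simp add: N11_def num_intra_def expectation_card_Int_intra_pairs
        prob_co_clustered[OF assms(1)] subset_iff)
qed

lemma prob_N11_deviation_le:
  fixes \<epsilon> :: real
  assumes s: "size_spec n s" and A: "A \<in> clusterings n" and "n \<ge> 2" "\<epsilon> > 0"
  shows "measure_pmf.prob (unif_clustering n s)
      {B. \<bar>real (N11 A B) / real (n choose 2)
           - real (num_intra A) * real (num_intra B) / (real (n choose 2))^2\<bar> > \<epsilon>}
    \<le> 64 / (\<epsilon>^2 * real n)"
    (is "measure_pmf.prob _ ?E \<le> _")
proof -
  let ?P = "measure_pmf.prob (unif_clustering n s)"
  define N where "N = real (n choose 2)"
  define f where "f = (\<lambda>B. real (N11 A B))"
  define \<mu> where "\<mu> = measure_pmf.expectation (unif_clustering n s) f"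
  have N: "N > 0"
    using \<open>n \<ge> 2\<close> by (simp add: N_def)
  have intra_A: "intra_pairs A \<subseteq> pairs_upto n"
    using A by (simp add: clusterings_def intra_pairs_subset_pairs_upto)
  have \<mu>_eq: "\<mu> = real (num_intra A) * (\<Sum>k\<in>#s. k choose 2) / N"
    using expectation_N11[OF s A] by (simp add: \<mu>_def f_def N_def)
  have "?E \<inter> set_pmf (unif_clustering n s) \<subseteq> {B. \<epsilon> * N \<le> \<bar>f B - \<mu>\<bar>}"
  proof (intro subsetI CollectI)
    fix B assume B: "B \<in> ?E \<inter> set_pmf (unif_clustering n s)"
    then have "num_intra B = (\<Sum>k\<in>#s. k choose 2)"
      using num_intra_sized_clusterings[of B n s] by (simp add: set_pmf_unif_clustering[OF s])
    then have "real (N11 A B) / N - real (num_intra A) * real (num_intra B) / N^2 = (f B - \<mu>) / N"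
      by (simp add: f_def \<mu>_eq diff_divide_distrib power2_eq_square)
    then have "\<epsilon> < \<bar>f B - \<mu>\<bar> / N"
      using B N by (simp add: N_def)
    then show "\<epsilon> * N \<le> \<bar>f B - \<mu>\<bar>"
      using N by (simp add: pos_less_divide_eq)
  qed
  then have "?P ?E \<le> ?P {B. \<epsilon> * N \<le> \<bar>f B - \<mu>\<bar>}"
    unfolding measure_Int_set_pmf[of _ ?E, symmetric] by (rule measure_pmf.finite_measure_mono) simp
  also have "\<dots> \<le> measure_pmf.variance (unif_clustering n s) f / (\<epsilon> * N)^2"
    using measure_pmf.Chebyshev_inequality[where M = "unif_clustering n s" and f = f and a = "\<epsilon> * N"] \<open>\<epsilon> > 0\<close> N
    by (simp add: \<mu>_def integrable_measure_pmf_finite set_pmf_unif_clustering[OF s]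
        finite_sized_clusterings)
  also have "\<dots> \<le> 4 * real n ^ 3 / (\<epsilon> * N)^2"
    using variance_card_Int_intra_pairs_le[OF s intra_A]
    by (intro divide_right_mono) (simp_all add: f_def N11_def)
  also have "\<dots> \<le> 64 / (\<epsilon>^2 * real n)"
    unfolding N_def by (rule cube_div_square_choose_two_le[OF \<open>n \<ge> 2\<close> \<open>\<epsilon> > 0\<close>])
  finally show ?thesis .
qed

theorem mainTheorem6:
  fixes A :: "nat \<Rightarrow> nat set set" and s :: "nat \<Rightarrow> nat multiset"
  assumes A: "\<And>n. A n \<in> clusterings n"
    and s: "\<And>n. size_spec n (s n)"
  shows "(\<lambda>n. measure_pmf.variance (unif_clustering n (s n))
            (\<lambda>B. real (N11 (A n) B))) \<in> o(\<lambda>n. real n ^ 4) \<and>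
         (\<forall>\<epsilon>::real. \<epsilon> > 0 \<longrightarrow>
          (\<lambda>n. measure_pmf.prob (unif_clustering n (s n))
             {B. \<bar>real (N11 (A n) B) / real (n choose 2)
                 - real (num_intra (A n)) * real (num_intra B) / (real (n choose 2))^2\<bar> > \<epsilon>})
          \<longlonglongrightarrow> 0)"
proof (intro conjI allI impI)
  have "measure_pmf.variance (unif_clustering n (s n)) (\<lambda>B. real (N11 (A n) B)) \<le> 4 * real n ^ 3"
    for n
    using variance_card_Int_intra_pairs_le[OF s] A
    by (simp add: N11_def clusterings_def intra_pairs_subset_pairs_upto)
  then have "(\<lambda>n. measure_pmf.variance (unif_clustering n (s n)) (\<lambda>B. real (N11 (A n) B)))
      \<in> O(\<lambda>n. real n ^ 3)"
    by (intro bigoI[where c = 4] always_eventually allI) (simp add: measure_pmf.variance_positive)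
  moreover have "(\<lambda>n. real n ^ 3) \<in> o(\<lambda>n. real n ^ 4)"
    by real_asymp
  ultimately show "(\<lambda>n. measure_pmf.variance (unif_clustering n (s n))
      (\<lambda>B. real (N11 (A n) B))) \<in> o(\<lambda>n. real n ^ 4)"
    by (rule landau_o.big_small_trans)
next
  fix \<epsilon> :: real assume "\<epsilon> > 0"
  let ?p = "\<lambda>n. measure_pmf.prob (unif_clustering n (s n))
      {B. \<bar>real (N11 (A n) B) / real (n choose 2)
          - real (num_intra (A n)) * real (num_intra B) / (real (n choose 2))^2\<bar> > \<epsilon>}"
  have "eventually (\<lambda>n. ?p n \<le> 64 / (\<epsilon>^2 * real n)) sequentially"
    using eventually_ge_at_top[of 2]
    by (rule eventually_mono) (rule prob_N11_deviation_le[OF s A _ \<open>\<epsilon> > 0\<close>])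
  moreover have "(\<lambda>n. 64 / (\<epsilon>^2 * real n)) \<longlonglongrightarrow> 0"
    using \<open>\<epsilon> > 0\<close> by real_asymp
  ultimately show "?p \<longlonglongrightarrow> 0"
    by (intro tendsto_sandwich[of "\<lambda>_. 0" ?p, OF always_eventually]) simp_all
qed

end
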